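(* Let $\varepsilon>0$ and let $\alpha,\beta\in\mathbb{Z}[\mathrm{i}]$ be non-zero multiplicatively independent Gaussian integers with $|\alpha|>1$ and $|\beta|>1$. Then there exist integers $m,n>0$ such that $|\alpha^m-\beta^n|<\varepsilon|\beta^n|$.
   Context: $\alpha,\beta$ are multiplicatively independent if there are no positive integers $j,k$ with $\beta^j=\alpha^k$. *)

theory Defs
  imports Complex_Main
begin

definition gaussian_int :: "complex \<Rightarrow> bool" where
  "gaussian_int z \<longleftrightarrow> Re z \<in> \<int> \<and> Im z \<in> \<int>"

definition mult_independent :: "complex \<Rightarrow> complex \<Rightarrow> bool" where
  "mult_independent \<alpha> \<beta> \<longleftrightarrow> \<not> (\<exists>j k :: nat. j > 0 \<and> k > 0 \<and> \<beta> ^ j = \<alpha> ^ k)"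

end

theory Submission
  imports Defs "HOL-Analysis.Analysis"
begin

text \<open>Divide \<open>\<alpha>^m\<close> by the power \<open>\<beta>^(N m)\<close> of nearly the same modulus: the quotients
  \<open>w m\<close> lie in the compact annulus \<open>1 \<le> |z| \<le> |\<beta>|\<close>, so two of them, \<open>w m\<close> and
  \<open>w m'\<close> with \<open>m < m'\<close>, are \<open>\<delta>\<close>-close, and then
  \<open>w m' / w m = \<alpha>^(m' - m) / \<beta>^(N m' - N m)\<close> is within \<open>\<delta>\<close> of \<open>1\<close>. Taking
  \<open>\<delta> \<le> |\<alpha>| - 1\<close> rules out \<open>N m' \<le> N m\<close>, since then this quotient would have
  modulus at least \<open>|\<alpha>|\<close>. The argument works for any two complex numbers of modulus greater
  than \<open>1\<close>.\<close>

lemma real_power_bracket: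
  fixes x s :: real
  assumes "1 \<le> x" "1 < s"
  obtains n where "s ^ n \<le> x" "x < s ^ Suc n"
proof -
  obtain N where N: "x < s ^ N" using real_arch_pow[OF assms(2)] by blast
  define k where "k = (LEAST k. x < s ^ k)"
  have k: "x < s ^ k" unfolding k_def by (rule LeastI[of _ N]) (rule N)
  then obtain n where kn: "k = Suc n" using assms(1) by (cases k) auto
  have "\<not> x < s ^ n" using not_less_Least[of n "\<lambda>k. x < s ^ k"] kn k_def by simp
  then show ?thesis using that k kn by (simp add: not_less)
qed

lemma power_normalising_exponents:
  fixes \<alpha> \<beta> :: "'a::real_normed_field"
  assumes "norm \<alpha> \<ge> 1" "norm \<beta> > 1"
  obtains N where "\<And>m. 1 \<le> norm (\<alpha> ^ m / \<beta> ^ N m)"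
    and "\<And>m. norm (\<alpha> ^ m / \<beta> ^ N m) \<le> norm \<beta>"
proof -
  have "\<exists>n. norm \<beta> ^ n \<le> norm (\<alpha> ^ m) \<and> norm (\<alpha> ^ m) < norm \<beta> ^ Suc n" for m
    using real_power_bracket[OF _ assms(2), of "norm (\<alpha> ^ m)"] assms(1)
    by (metis norm_power one_le_power)
  then obtain N where N: "\<And>m. norm \<beta> ^ N m \<le> norm (\<alpha> ^ m) \<and> norm (\<alpha> ^ m) < norm \<beta> ^ Suc (N m)"
    by metis
  have pos: "norm \<beta> ^ N m > 0" for m using assms(2) by (intro zero_less_power) linarith
  show ?thesis
  proof (rule that)
    fix m
    show "1 \<le> norm (\<alpha> ^ m / \<beta> ^ N m)"
      using N[of m] pos[of m] by (simp add: norm_divide norm_power le_divide_eq)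
    show "norm (\<alpha> ^ m / \<beta> ^ N m) \<le> norm \<beta>"
      using N[of m] pos[of m] by (simp add: norm_divide norm_power divide_le_eq)
  qed
qed

lemma bounded_range_close_pair:
  fixes w :: "nat \<Rightarrow> 'a::heine_borel"
  assumes "bounded (range w)" "\<delta> > 0"
  obtains i j where "i < j" "dist (w i) (w j) < \<delta>"
proof -
  obtain l r where r: "strict_mono r" and lim: "(w \<circ> r) \<longlonglongrightarrow> l"
    using bounded_imp_convergent_subsequence[OF assms(1)] by blast
  from LIMSEQ_imp_Cauchy[OF lim] assms(2) obtain M
    where "\<And>i j. i \<ge> M \<Longrightarrow> j \<ge> M \<Longrightarrow> dist ((w \<circ> r) i) ((w \<circ> r) j) < \<delta>"
    unfolding Cauchy_def by blast
  then show ?thesis using that[of "r M" "r (Suc M)"] strict_monoD[OF r, of M "Suc M"] by simp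
qed

lemma power_quotient_lower_bound:
  fixes \<alpha> \<beta> :: "'a::real_normed_field"
  assumes "norm \<alpha> > 1" "norm \<beta> \<ge> 1" "a > 0"
  shows "norm \<alpha> \<le> norm (\<alpha> ^ a * \<beta> ^ b)"
proof -
  have "norm \<alpha> \<le> norm \<alpha> ^ a"
    using power_increasing[of 1 a "norm \<alpha>"] assms(1,3) by simp
  also have "\<dots> \<le> norm \<alpha> ^ a * norm \<beta> ^ b"
    using assms(2) by (simp add: mult_le_cancel_left1 one_le_power)
  finally show ?thesis by (simp add: norm_mult norm_power)
qed

lemma powers_relatively_close:
  fixes \<alpha> \<beta> :: "'a::{real_normed_field, heine_borel}"
  assumes "\<epsilon> > 0" "norm \<alpha> > 1" "norm \<beta> > 1"
  shows "\<exists>m n. m > 0 \<and> n > 0 \<and> norm (\<alpha> ^ m - \<beta> ^ n) < \<epsilon> * norm (\<beta> ^ n)"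
proof -
  obtain N where N_ge: "\<And>m. 1 \<le> norm (\<alpha> ^ m / \<beta> ^ N m)"
    and N_le: "\<And>m. norm (\<alpha> ^ m / \<beta> ^ N m) \<le> norm \<beta>"
    using power_normalising_exponents[OF less_imp_le[OF assms(2)] assms(3)] by blast
  define w where "w m = \<alpha> ^ m / \<beta> ^ N m" for m
  have \<beta>0: "\<beta> \<noteq> 0" and \<alpha>0: "\<alpha> \<noteq> 0" using assms(2,3) by auto
  have w_ge: "1 \<le> norm (w m)" for m using N_ge by (simp add: w_def)
  have "norm (w m) \<le> norm \<beta>" for m using N_le by (simp add: w_def)
  then have "bounded (range w)" by (auto simp: bounded_iff)
  moreover define \<delta> where "\<delta> = min \<epsilon> (norm \<alpha> - 1)"
  moreover have "\<delta> > 0" using assms(1,2) by (simp add: \<delta>_def)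
  ultimately obtain m m' where mm': "m < m'" and close: "norm (w m' - w m) < \<delta>"
    using bounded_range_close_pair by (metis dist_norm dist_commute)
  define \<eta> where "\<eta> = w m' / w m - 1"
  have "norm \<eta> = norm (w m' - w m) / norm (w m)"
    using w_ge[of m] by (auto simp: \<eta>_def norm_divide[symmetric] diff_divide_distrib)
  also have "\<dots> \<le> norm (w m' - w m)"
    using w_ge[of m] by (simp add: divide_le_eq mult_le_cancel_left1)
  finally have \<eta>: "norm \<eta> < \<delta>" using close by simp
  define a where "a = m' - m"
  have \<alpha>_split: "\<alpha> ^ m' = \<alpha> ^ a * \<alpha> ^ m" using mm' by (simp add: a_def power_add[symmetric])
  have N_less: "N m < N m'"
  proof (rule ccontr)
    assume "\<not> N m < N m'"
    then have "\<beta> ^ N m = \<beta> ^ (N m - N m') * \<beta> ^ N m'" by (simp add: power_add[symmetric])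
    then have "w m' / w m = \<alpha> ^ a * \<beta> ^ (N m - N m')"
      using \<alpha>_split \<alpha>0 \<beta>0 by (simp add: w_def field_simps)
    then have "norm \<alpha> \<le> 1 + norm \<eta>"
      using power_quotient_lower_bound[of \<alpha> \<beta> a "N m - N m'"] assms(2,3) mm'
        norm_triangle_ineq[of \<eta> 1]
      by (simp add: a_def \<eta>_def)
    then show False using \<eta> by (simp add: \<delta>_def)
  qed
  define b where "b = N m' - N m"
  have "\<beta> ^ N m' = \<beta> ^ b * \<beta> ^ N m" using N_less by (simp add: b_def power_add[symmetric])
  then have "\<alpha> ^ a - \<beta> ^ b = \<eta> * \<beta> ^ b"
    using \<alpha>_split \<alpha>0 \<beta>0 by (simp add: \<eta>_def w_def field_simps)
  then have "norm (\<alpha> ^ a - \<beta> ^ b) = norm \<eta> * norm (\<beta> ^ b)" by (simp add: norm_mult)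
  also have "\<dots> < \<epsilon> * norm (\<beta> ^ b)"
    using \<eta> \<beta>0 by (intro mult_strict_right_mono) (auto simp: \<delta>_def)
  finally show ?thesis
    using mm' N_less by (intro exI[of _ a] exI[of _ b]) (simp add: a_def b_def)
qed

theorem corollary2p3:
  fixes \<epsilon> :: real and \<alpha> \<beta> :: complex
  assumes "\<epsilon> > 0"
    and "gaussian_int \<alpha>" and "gaussian_int \<beta>"
    and "\<alpha> \<noteq> 0" and "\<beta> \<noteq> 0"
    and "mult_independent \<alpha> \<beta>"
    and "norm \<alpha> > 1" and "norm \<beta> > 1"
  shows "\<exists>m n :: nat. m > 0 \<and> n > 0 \<and> norm (\<alpha> ^ m - \<beta> ^ n) < \<epsilon> * norm (\<beta> ^ n)"
  using powers_relatively_close[OF assms(1,7,8)] .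

end
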